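(* Consider a power allocation game (PAG) as described in the context in which no country has friends ($\mathcal F_i=\emptyset$ for all $i$) and the adversary relations form a bipartite graph: there is a partition $\mathbf n=\mathcal L\cup\mathcal R$, $\mathcal L\cap\mathcal R=\emptyset$, such that whenever $j\in\mathcal A_i$, one of $i,j$ lies in $\mathcal L$ and the other in $\mathcal R$. Let $i\in\mathbf n$. If there exists a Nash equilibrium $U^*\in\mathcal U^*$ with $\sigma_i(U^* )>\tau_i(U^* )$ (country $i$ is safe), then for every $j\in\mathcal A_i$, $$p_j\ \le\ \sum_{k\in\mathcal A_j}p_k .$$
   Context: Power allocation game (PAG). There are $n$ countries labelled by $\mathbf n=\{1,\dots,n\}$; country $i$ has total power $p_i\ge 0$. Each country $i$ has a set of friends $\mathcal F_i\subseteq\mathbf n$ and a set of adversaries $\mathcal A_i\subseteq\mathbf n$; the sets $\{i\}$, $\mathcal F_i$, $\mathcal A_i$ are pairwise disjoint, and the relations are symmetric ($j\in\mathcal F_i\iff i\in\mathcal F_j$, $j\in\mathcal A_i\iff i\in\mathcal A_j$). An admissible power allocation matrix is a real $n\times n$ matrix $U=[u_{ij}]$ with $u_{ij}\ge0$, $u_{ij}=0$ whenever $j\notin\{i\}\cup\mathcal F_i\cup\mathcal A_i$, and $\sum_{j=1}^n u_{ij}=p_i$ for every $i$. Row $i$ is country $i$'s strategy: $u_{ii}$ is power kept in reserve, $u_{ij}$ ($j\in\mathcal F_i$) is support given to friend $j$, $u_{ij}$ ($j\in\mathcal A_i$) is offense against adversary $j$. $\mathcal U$ is the set of admissible matrices.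 The support of $i$ is $\sigma_i(U)=u_{ii}+\sum_{j\in\mathcal F_i}u_{ji}+\sum_{j\in\mathcal A_i}u_{ij}$ and the threat to $i$ is $\tau_i(U)=\sum_{j\in\mathcal A_i}u_{ji}$. The state $x_i(U)$ is "safe" if $\sigma_i(U)>\tau_i(U)$, "precarious" if $\sigma_i(U)=\tau_i(U)$, "unsafe" if $\sigma_i(U)<\tau_i(U)$; country $i$ survives at $U$ if it is safe or precarious. Preferences. For $U,V\in\mathcal U$, country $i$ weakly prefers $V$ to $U$ (written $U\preceq_i V$) iff (a) for all $j\in\{i\}\cup\mathcal F_i$: $x_j(V)\in\{\text{safe},\text{precarious}\}$ or $x_j(U)=\text{unsafe}$; and (b) for all $j\in\mathcal A_i$: $x_j(V)\in\{\text{unsafe},\text{precarious}\}$ or $x_j(U)=\text{safe}$. Country $i$ strictly prefers $V$ to $U$ (written $U\prec_i V$) iff either $i$ survives at $V$ and is unsafe at $U$ (priority of self-survival), or $U\preceq_i V$ holds and $V\preceq_i U$ fails. Nash equilibrium. $U^*\in\mathcal U$ is a (pure strategy) Nash equilibrium if no country has a profitable unilateral deviation: for every $i\in\mathbf n$ and every $V\in\mathcal U$ differing from $U^*$ only in row $i$, it is not the case that $U^*\prec_i V$. $\mathcal U^*$ denotes the set of Nash equilibria. *)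

theory Defs
  imports Main "HOL.Real"
begin

text \<open>Countries are 1..n. p i is the total power of i,
  F i the friends and A i the adversaries of i. Matrices are functions
  nat => nat => real, only entries with indices in 1..n matter.\<close>

definition countries :: "nat \<Rightarrow> nat set" where
  "countries n = {1..n}"

definition valid_pag :: "nat \<Rightarrow> (nat \<Rightarrow> real) \<Rightarrow> (nat \<Rightarrow> nat set) \<Rightarrow> (nat \<Rightarrow> nat set) \<Rightarrow> bool" where
  "valid_pag n p F A \<longleftrightarrow>
     (\<forall>i\<in>countries n. p i \<ge> 0 \<and> F i \<subseteq> countries n \<and> A i \<subseteq> countries n
        \<and> i \<notin> F i \<and> i \<notin> A i \<and> F i \<inter> A i = {}) \<and>
     (\<forall>i\<in>countries n. \<forall>j\<in>countries n. (j \<in> F i \<longleftrightarrow> i \<in> F j) \<and> (j \<in> A i \<longleftrightarrow> i \<in> A j))"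

definition admissible :: "nat \<Rightarrow> (nat \<Rightarrow> real) \<Rightarrow> (nat \<Rightarrow> nat set) \<Rightarrow> (nat \<Rightarrow> nat set) \<Rightarrow> (nat \<Rightarrow> nat \<Rightarrow> real) \<Rightarrow> bool" where
  "admissible n p F A U \<longleftrightarrow>
     (\<forall>i\<in>countries n. \<forall>j\<in>countries n. U i j \<ge> 0) \<and>
     (\<forall>i\<in>countries n. \<forall>j\<in>countries n. j \<notin> {i} \<union> F i \<union> A i \<longrightarrow> U i j = 0) \<and>
     (\<forall>i\<in>countries n. (\<Sum>j\<in>countries n. U i j) = p i)"

definition support :: "(nat \<Rightarrow> nat set) \<Rightarrow> (nat \<Rightarrow> nat set) \<Rightarrow> (nat \<Rightarrow> nat \<Rightarrow> real) \<Rightarrow> nat \<Rightarrow> real" where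
  "support F A U i = U i i + (\<Sum>j\<in>F i. U j i) + (\<Sum>j\<in>A i. U i j)"

definition threat :: "(nat \<Rightarrow> nat set) \<Rightarrow> (nat \<Rightarrow> nat \<Rightarrow> real) \<Rightarrow> nat \<Rightarrow> real" where
  "threat A U i = (\<Sum>j\<in>A i. U j i)"

datatype state = Safe | Precarious | Unsafe

definition state_of :: "(nat \<Rightarrow> nat set) \<Rightarrow> (nat \<Rightarrow> nat set) \<Rightarrow> (nat \<Rightarrow> nat \<Rightarrow> real) \<Rightarrow> nat \<Rightarrow> state" where
  "state_of F A U i =
     (if support F A U i > threat A U i then Safe
      else if support F A U i = threat A U i then Precarious else Unsafe)"

definition survives :: "(nat \<Rightarrow> nat set) \<Rightarrow> (nat \<Rightarrow> nat set) \<Rightarrow> (nat \<Rightarrow> nat \<Rightarrow> real) \<Rightarrow> nat \<Rightarrow> bool" where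
  "survives F A U i \<longleftrightarrow> state_of F A U i \<in> {Safe, Precarious}"

definition weak_pref :: "(nat \<Rightarrow> nat set) \<Rightarrow> (nat \<Rightarrow> nat set) \<Rightarrow> nat \<Rightarrow> (nat \<Rightarrow> nat \<Rightarrow> real) \<Rightarrow> (nat \<Rightarrow> nat \<Rightarrow> real) \<Rightarrow> bool" where
  "weak_pref F A i U V \<longleftrightarrow>
     (\<forall>j\<in>{i} \<union> F i. state_of F A V j \<in> {Safe, Precarious} \<or> state_of F A U j = Unsafe) \<and>
     (\<forall>j\<in>A i. state_of F A V j \<in> {Unsafe, Precarious} \<or> state_of F A U j = Safe)"

definition strict_pref :: "(nat \<Rightarrow> nat set) \<Rightarrow> (nat \<Rightarrow> nat set) \<Rightarrow> nat \<Rightarrow> (nat \<Rightarrow> nat \<Rightarrow> real) \<Rightarrow> (nat \<Rightarrow> nat \<Rightarrow> real) \<Rightarrow> bool" where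
  "strict_pref F A i U V \<longleftrightarrow>
     (survives F A V i \<and> state_of F A U i = Unsafe) \<or>
     (weak_pref F A i U V \<and> \<not> weak_pref F A i V U)"

definition nash_eq :: "nat \<Rightarrow> (nat \<Rightarrow> real) \<Rightarrow> (nat \<Rightarrow> nat set) \<Rightarrow> (nat \<Rightarrow> nat set) \<Rightarrow> (nat \<Rightarrow> nat \<Rightarrow> real) \<Rightarrow> bool" where
  "nash_eq n p F A U \<longleftrightarrow> admissible n p F A U \<and>
     (\<forall>i\<in>countries n. \<forall>V. admissible n p F A V \<and>
        (\<forall>k\<in>countries n. k \<noteq> i \<longrightarrow> (\<forall>j\<in>countries n. V k j = U k j))
        \<longrightarrow> \<not> strict_pref F A i U V)"

end

theory Submission
  imports Defs
begin

text \<open>Suppose the safe country \<open>i\<close> has an adversary \<open>j\<close> whose power exceeds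
  the total power of all adversaries of \<open>j\<close>. Without friends, the support of every
  country is its whole power. So \<open>j\<close> can deviate by attacking each adversary \<open>k\<close>
  with exactly \<open>p k\<close> and throwing the surplus at \<open>i\<close>: then \<open>j\<close> stays safe (its
  threat is at most the adversaries' total power), no adversary of \<open>j\<close> is safe, and
  \<open>i\<close> becomes unsafe. This is a strict improvement for \<open>j\<close>, contradicting the
  equilibrium.\<close>

lemma finite_countries: "finite (countries n)"
  by (simp add: countries_def)

lemma adversaries_subset_countries:
  "valid_pag n p F A \<Longrightarrow> k \<in> countries n \<Longrightarrow> A k \<subseteq> countries n"
  by (simp add: valid_pag_def)

lemma finite_adversaries:
  "valid_pag n p F A \<Longrightarrow> k \<in> countries n \<Longrightarrow> finite (A k)"
  by (rule finite_subset[OF adversaries_subset_countries finite_countries])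

lemma adversary_sym:
  assumes pag: "valid_pag n p F A" and k: "k \<in> countries n" and j: "j \<in> A k"
  shows "k \<in> A j"
proof -
  have "j \<in> countries n" using adversaries_subset_countries[OF pag k] j by blast
  with pag k j show ?thesis unfolding valid_pag_def by blast
qed

lemma admissible_entry_le_power:
  assumes "admissible n p F A U" "m \<in> countries n" "l \<in> countries n"
  shows "U m l \<le> p m"
proof -
  have "U m l \<le> (\<Sum>j\<in>countries n. U m j)"
    by (rule member_le_sum) (use assms finite_countries in \<open>auto simp: admissible_def\<close>)
  with assms show ?thesis by (simp add: admissible_def)
qed

lemma support_eq_power_if_no_friends:
  assumes pag: "valid_pag n p F A" and "F k = {}" and adm: "admissible n p F A U"
    and k: "k \<in> countries n"
  shows "support F A U k = p k"
proof -
  have Ak: "A k \<subseteq> countries n" "k \<notin> A k" "finite (A k)"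
    using pag k finite_adversaries by (auto simp: valid_pag_def)
  have "p k = (\<Sum>j\<in>countries n. U k j)"
    using adm k by (simp add: admissible_def)
  also have "\<dots> = (\<Sum>j\<in>insert k (A k). U k j)"
    using adm k \<open>F k = {}\<close> Ak finite_countries
    by (intro sum.mono_neutral_right) (auto simp: admissible_def)
  also have "\<dots> = U k k + (\<Sum>j\<in>A k. U k j)"
    using Ak by simp
  finally show ?thesis
    using \<open>F k = {}\<close> by (simp add: support_def)
qed

lemma threat_ge_entry:
  assumes pag: "valid_pag n p F A" and adm: "admissible n p F A U"
    and k: "k \<in> countries n" and m: "m \<in> A k"
  shows "U m k \<le> threat A U k"
proof -
  have "A k \<subseteq> countries n" using adversaries_subset_countries[OF pag k] .
  then show ?thesis
    unfolding threat_def using adm k m finite_adversaries[OF pag k]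
    by (intro member_le_sum) (auto simp: admissible_def)
qed

lemma threat_le_adversary_power:
  assumes pag: "valid_pag n p F A" and adm: "admissible n p F A U" and k: "k \<in> countries n"
  shows "threat A U k \<le> (\<Sum>m\<in>A k. p m)"
  unfolding threat_def
  by (rule sum_mono) (use assms admissible_entry_le_power adversaries_subset_countries in blast)

definition overwhelming_row :: "(nat \<Rightarrow> real) \<Rightarrow> (nat \<Rightarrow> nat set) \<Rightarrow> nat \<Rightarrow> nat \<Rightarrow> nat \<Rightarrow> real" where
  "overwhelming_row p A j i l =
     (if l \<in> A j then p l + (if l = i then p j - (\<Sum>k\<in>A j. p k) else 0) else 0)"

lemma sum_overwhelming_row:
  assumes pag: "valid_pag n p F A" and j: "j \<in> countries n" and i: "i \<in> A j"
  shows "(\<Sum>l\<in>countries n. overwhelming_row p A j i l) = p j"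
proof -
  have "(\<Sum>l\<in>countries n. overwhelming_row p A j i l) = (\<Sum>l\<in>A j. overwhelming_row p A j i l)"
    using adversaries_subset_countries[OF pag j] finite_countries
    by (intro sum.mono_neutral_right) (auto simp: overwhelming_row_def)
  also have "\<dots> = (\<Sum>l\<in>A j. p l) + (p j - (\<Sum>k\<in>A j. p k))"
    using finite_adversaries[OF pag j] i
    by (simp add: overwhelming_row_def sum.distrib sum.delta)
  finally show ?thesis by simp
qed

lemma admissible_overwhelming_deviation:
  assumes pag: "valid_pag n p F A" and adm: "admissible n p F A U"
    and j: "j \<in> countries n" and i: "i \<in> A j" and dominant: "(\<Sum>k\<in>A j. p k) < p j"
  shows "admissible n p F A (U(j := overwhelming_row p A j i))"
proof -
  have "0 \<le> overwhelming_row p A j i l" if "l \<in> countries n" for l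
    using pag that dominant by (auto simp: overwhelming_row_def valid_pag_def)
  then show ?thesis
    using adm sum_overwhelming_row[OF pag j i]
    by (auto simp: admissible_def overwhelming_row_def)
qed

lemma strict_pref_if_overwhelming:
  assumes "i \<in> A j" and "F j = {}"
    and "state_of F A V j = Safe" and "\<forall>k\<in>A j. state_of F A V k \<noteq> Safe"
    and "state_of F A U i = Safe" and "state_of F A V i = Unsafe"
  shows "strict_pref F A j U V"
proof -
  have "\<forall>k\<in>A j. state_of F A V k \<in> {Unsafe, Precarious}"
    using assms(4) state.exhaust by blast
  then have "weak_pref F A j U V"
    using assms(2,3) by (simp add: weak_pref_def)
  moreover have "\<not> weak_pref F A j V U"
    using assms(1,5,6) by (force simp: weak_pref_def)
  ultimately show ?thesis by (simp add: strict_pref_def)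
qed

lemma nash_eq_adversary_of_dominant_not_safe:
  assumes pag: "valid_pag n p F A" and no_friends: "\<forall>k\<in>countries n. F k = {}"
    and ne: "nash_eq n p F A U"
    and j: "j \<in> countries n" and dominant: "(\<Sum>k\<in>A j. p k) < p j" and i: "i \<in> A j"
  shows "state_of F A U i \<noteq> Safe"
proof
  assume U_safe: "state_of F A U i = Safe"
  define V where "V = U(j := overwhelming_row p A j i)"
  have adm: "admissible n p F A U" using ne by (simp add: nash_eq_def)
  have admV: "admissible n p F A V"
    unfolding V_def using admissible_overwhelming_deviation[OF pag adm j i dominant] .
  have Aj: "A j \<subseteq> countries n" using adversaries_subset_countries[OF pag j] .
  have support_V: "support F A V k = p k" if "k \<in> countries n" for k
    using support_eq_power_if_no_friends[OF pag _ admV that] no_friends that by blast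
  have "threat A V j < support F A V j"
    using threat_le_adversary_power[OF pag admV j] dominant support_V[OF j] by linarith
  then have j_safe: "state_of F A V j = Safe" by (simp add: state_of_def)
  have hit: "V j k \<le> threat A V k" if "k \<in> A j" for k
    using threat_ge_entry[OF pag admV _ adversary_sym[OF pag j that]] Aj that by blast
  have "support F A V k \<le> threat A V k" if "k \<in> A j" for k
  proof -
    have "p k \<le> V j k"
      using that dominant by (simp add: V_def overwhelming_row_def)
    then show ?thesis
      using hit[OF that] support_V[of k] Aj that by auto
  qed
  then have adversaries: "\<forall>k\<in>A j. state_of F A V k \<noteq> Safe"
    by (simp add: state_of_def not_less)
  have "support F A V i < threat A V i"
    using hit[OF i] support_V[of i] Aj i dominant by (auto simp: V_def overwhelming_row_def)
  then have i_unsafe: "state_of F A V i = Unsafe" by (simp add: state_of_def)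
  have "strict_pref F A j U V"
    using strict_pref_if_overwhelming[OF i _ j_safe adversaries U_safe i_unsafe] no_friends j
    by blast
  moreover have "\<forall>k\<in>countries n. k \<noteq> j \<longrightarrow> (\<forall>l\<in>countries n. V k l = U k l)"
    by (simp add: V_def)
  ultimately show False
    using ne j admV by (auto simp: nash_eq_def)
qed

theorem theorem4:
  fixes n :: nat and p :: "nat \<Rightarrow> real" and F A :: "nat \<Rightarrow> nat set"
    and L R :: "nat set" and i :: nat
  assumes pag: "valid_pag n p F A"
    and no_friends: "\<forall>k\<in>countries n. F k = {}"
    and partition: "L \<union> R = countries n" "L \<inter> R = {}"
    and bipartite: "\<forall>k\<in>countries n. \<forall>j\<in>A k. (k \<in> L \<and> j \<in> R) \<or> (k \<in> R \<and> j \<in> L)"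
    and i_in: "i \<in> countries n"
    and ex_ne: "\<exists>U. nash_eq n p F A U \<and> support F A U i > threat A U i"
  shows "\<forall>j\<in>A i. p j \<le> (\<Sum>k\<in>A j. p k)"
proof (rule ballI, rule ccontr)
  fix j assume j: "j \<in> A i" and "\<not> p j \<le> (\<Sum>k\<in>A j. p k)"
  then have dominant: "(\<Sum>k\<in>A j. p k) < p j" by simp
  obtain U where ne: "nash_eq n p F A U" and "support F A U i > threat A U i"
    using ex_ne by blast
  then have "state_of F A U i = Safe" by (simp add: state_of_def)
  moreover have "j \<in> countries n"
    using adversaries_subset_countries[OF pag i_in] j by blast
  ultimately show False
    using nash_eq_adversary_of_dominant_not_safe[OF pag no_friends ne _ dominant]
      adversary_sym[OF pag i_in j] by blast
qed

end
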